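(* Let $h=(X,E,\mathit{in}_0)$ be a flow graph over a flow monoid $\mathbb{M}$ all of whose edge functions are continuous and distributive. Then for every inflow $\mathit{in}:(\mathbb{N}\setminus X)\times X\to\mathbb{M}$, every $y\in X$ and every $z\in\mathbb{N}\setminus X$, $$\mathsf{tf}(h)(\mathit{in})(y,z)=\sum_{x\in X}\ \sum_{p\in\mathrm{Paths}_h(x\to(y,z))}E_p(\mathit{in}_x).$$
   Context: A flow monoid is a commutative monoid $(\mathbb{M},+,0)$ such that $n\le m :\iff \exists o.\ m=n+o$ is a partial order in which every ascending chain $K$ has a least upper bound $\bigsqcup K$, and $n+\bigsqcup K=\bigsqcup(n+K)$. $\mathcal{C}(\mathbb{M}\to\mathbb{M})$ is the set of functions commuting with least upper bounds of ascending chains (continuous). A function $f$ is distributive if $f(m+n)=f(m)+f(n)$ for all $m,n$ and $f(0)=0$. Infinite sums denote least upper bounds of the ascending chain of finite partial sums; empty sums are $0$. A flow graph is $h=(X,E,\mathit{in})$ with $X\subseteq\mathbb{N}$ finite, $E:X\times\mathbb{N}\to\mathcal{C}(\mathbb{M}\to\mathbb{M})$, $\mathit{in}:(\mathbb{N}\setminus X)\times X\to\mathbb{M}$; $\mathit{in}_x=\sum_{y\in\mathbb{N}\setminus X}\mathit{in}(y,x)$; the flow is the least $\mathit{flow}:X\to\mathbb{M}$ with $\mathit{flow}(x)=\mathit{in}_x+\sum_{y\in X}E(y,x)(\mathit{flow}(y))$; the outflow is $\mathit{out}(x,y)=E(x,y)(\mathit{flow}(x))$ for $x\in X$, $y\notin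 X$. The transfer function $\mathsf{tf}(h)(\mathit{in}')$ is the outflow of $(X,E,\mathit{in}')$. A path through $h$ is a sequence $p=x_0x_1\cdots x_nz$ with $n\ge0$, $x_i\in X$, $z\in\mathbb{N}\setminus X$; $\mathrm{first}(p)=x_0$, $\mathrm{last}(p)=x_n$. $\mathrm{Paths}_h(x\to(y,z))$ is the set of paths with $x_0=x$, $x_n=y$ and final element $z$. Its edge function is $E_p=E(x_n,z)\circ E(x_{n-1},x_n)\circ\cdots\circ E(x_0,x_1)$. *)

theory Defs
  imports Main
begin

definition mle :: "'m::comm_monoid_add \<Rightarrow> 'm \<Rightarrow> bool" where
  "mle n m \<longleftrightarrow> (\<exists>d. m = n + d)"

definition is_lub :: "'m::comm_monoid_add set \<Rightarrow> 'm \<Rightarrow> bool" where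
  "is_lub S u \<longleftrightarrow> (\<forall>s\<in>S. mle s u) \<and> (\<forall>v. (\<forall>s\<in>S. mle s v) \<longrightarrow> mle u v)"

definition lub :: "'m::comm_monoid_add set \<Rightarrow> 'm" where
  "lub S = (THE u. is_lub S u)"

definition asc_chain :: "(nat \<Rightarrow> 'm::comm_monoid_add) \<Rightarrow> bool" where
  "asc_chain K \<longleftrightarrow> (\<forall>i. mle (K i) (K (Suc i)))"

definition flow_monoid :: "'m::comm_monoid_add itself \<Rightarrow> bool" where
  "flow_monoid _ \<longleftrightarrow>
     (\<forall>a b::'m. mle a b \<and> mle b a \<longrightarrow> a = b) \<and>
     (\<forall>K::nat \<Rightarrow> 'm. asc_chain K \<longrightarrow> (\<exists>u. is_lub (range K) u)) \<and>
     (\<forall>(K::nat \<Rightarrow> 'm) n. asc_chain K \<longrightarrow> is_lub (range (\<lambda>i. n + K i)) (n + lub (range K)))"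

definition mcont :: "('m::comm_monoid_add \<Rightarrow> 'm) \<Rightarrow> bool" where
  "mcont f \<longleftrightarrow> (\<forall>K. asc_chain K \<longrightarrow> is_lub (range (\<lambda>i. f (K i))) (f (lub (range K))))"

definition distributive :: "('m::comm_monoid_add \<Rightarrow> 'm) \<Rightarrow> bool" where
  "distributive f \<longleftrightarrow> (\<forall>m n. f (m + n) = f m + f n) \<and> f 0 = 0"

definition msum :: "('a \<Rightarrow> 'm::comm_monoid_add) \<Rightarrow> 'a set \<Rightarrow> 'm" where
  "msum f S = lub {sum f F | F. finite F \<and> F \<subseteq> S}"

text \<open>A flow graph is a triple (X, E, in) with X a finite set of naturals,
  E x y the edge function from x \<in> X to y, and in y x the inflow from y \<notin> X to x \<in> X.\<close>
type_synonym 'm flow_graph = "nat set \<times> (nat \<Rightarrow> nat \<Rightarrow> 'm \<Rightarrow> 'm) \<times> (nat \<Rightarrow> nat \<Rightarrow> 'm)"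

definition inflow_at :: "nat set \<Rightarrow> (nat \<Rightarrow> nat \<Rightarrow> 'm::comm_monoid_add) \<Rightarrow> nat \<Rightarrow> 'm" where
  "inflow_at X infl x = msum (\<lambda>y. infl y x) (- X)"

definition is_flow :: "nat set \<Rightarrow> (nat \<Rightarrow> nat \<Rightarrow> 'm \<Rightarrow> 'm) \<Rightarrow> (nat \<Rightarrow> nat \<Rightarrow> 'm::comm_monoid_add)
    \<Rightarrow> (nat \<Rightarrow> 'm) \<Rightarrow> bool" where
  "is_flow X E infl fl \<longleftrightarrow>
     (\<forall>x\<in>X. fl x = inflow_at X infl x + (\<Sum>y\<in>X. E y x (fl y)))"

definition flow :: "nat set \<Rightarrow> (nat \<Rightarrow> nat \<Rightarrow> 'm \<Rightarrow> 'm) \<Rightarrow> (nat \<Rightarrow> nat \<Rightarrow> 'm::comm_monoid_add)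
    \<Rightarrow> nat \<Rightarrow> 'm" where
  "flow X E infl = (THE fl. is_flow X E infl fl \<and>
       (\<forall>fl'. is_flow X E infl fl' \<longrightarrow> (\<forall>x\<in>X. mle (fl x) (fl' x))) \<and>
       (\<forall>x. x \<notin> X \<longrightarrow> fl x = 0))"

definition outflow :: "nat set \<Rightarrow> (nat \<Rightarrow> nat \<Rightarrow> 'm \<Rightarrow> 'm) \<Rightarrow> (nat \<Rightarrow> nat \<Rightarrow> 'm::comm_monoid_add)
    \<Rightarrow> nat \<Rightarrow> nat \<Rightarrow> 'm" where
  "outflow X E infl x y = (if x \<in> X \<and> y \<notin> X then E x y (flow X E infl x) else 0)"

definition tf :: "'m::comm_monoid_add flow_graph \<Rightarrow> (nat \<Rightarrow> nat \<Rightarrow> 'm) \<Rightarrow> nat \<Rightarrow> nat \<Rightarrow> 'm" where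
  "tf h infl' = (case h of (X, E, _) \<Rightarrow> outflow X E infl')"

text \<open>A path x0 x1 ... xn z is represented by the nonempty list [x0,...,xn] (all in X)
  together with the exit node z.  Paths_h(x \<rightarrow> (y,z)) for fixed z is the set of such lists.\<close>
definition paths :: "'m flow_graph \<Rightarrow> nat \<Rightarrow> nat \<Rightarrow> nat \<Rightarrow> nat list set" where
  "paths h x y z = (case h of (X, E, _) \<Rightarrow>
     (if z \<notin> X then {xs. xs \<noteq> [] \<and> set xs \<subseteq> X \<and> hd xs = x \<and> last xs = y} else {}))"

fun inner_edges :: "(nat \<Rightarrow> nat \<Rightarrow> 'm \<Rightarrow> 'm) \<Rightarrow> nat list \<Rightarrow> 'm \<Rightarrow> 'm" where
  "inner_edges E [] = id"
| "inner_edges E [x] = id"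
| "inner_edges E (x # x' # xs) = inner_edges E (x' # xs) \<circ> E x x'"

definition path_fun :: "(nat \<Rightarrow> nat \<Rightarrow> 'm \<Rightarrow> 'm) \<Rightarrow> nat list \<Rightarrow> nat \<Rightarrow> 'm \<Rightarrow> 'm" where
  "path_fun E xs z = E (last xs) z \<circ> inner_edges E xs"

end

theory Submission
  imports Defs
begin

text \<open>The flow is the limit of the Kleene iterates of the flow equation, starting from 0.
  Since the edge functions are distributive, unfolding the equation n times expresses the
  n-th iterate at y as the sum, over all x, of \<open>E\<^sub>p(in\<^sub>x)\<close> for the paths p from x to y with
  at most n nodes.  Applying the continuous edge function \<open>E(y,z)\<close> and passing to the limit
  turns these finite sums into the sums over all paths, because the length-bounded path sets
  exhaust the path sets and least upper bounds of chains commute with finite sums.\<close>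

lemma mle_refl: "mle (a::'m::comm_monoid_add) a"
  unfolding mle_def by (rule exI[of _ 0]) simp

lemma mle_trans: "mle (a::'m::comm_monoid_add) b \<Longrightarrow> mle b c \<Longrightarrow> mle a c"
  unfolding mle_def by (metis add.assoc)

lemma mle_0: "mle 0 (a::'m::comm_monoid_add)"
  unfolding mle_def by simp

lemma mle_add_mono: "mle (a::'m::comm_monoid_add) b \<Longrightarrow> mle c d \<Longrightarrow> mle (a + c) (b + d)"
  unfolding mle_def by (metis add.assoc add.commute)

lemma mle_sum_mono:
  "(\<And>x. x \<in> S \<Longrightarrow> mle (f x) (g x)) \<Longrightarrow> mle (sum f S) (sum (g::_ \<Rightarrow> 'm::comm_monoid_add) S)"
  by (induction S rule: infinite_finite_induct) (simp_all add: mle_refl mle_add_mono)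

lemma mle_sum_subset:
  "finite B \<Longrightarrow> A \<subseteq> B \<Longrightarrow> mle (sum f A) (sum (f::_ \<Rightarrow> 'm::comm_monoid_add) B)"
  using sum.subset_diff[of A B f] unfolding mle_def by (metis add.commute)

lemma distributive_mle_mono:
  "distributive f \<Longrightarrow> mle a b \<Longrightarrow> mle (f a) (f (b::'m::comm_monoid_add))"
  unfolding distributive_def mle_def by metis

lemma distributive_sum:
  "distributive f \<Longrightarrow> f (sum g S) = (\<Sum>x\<in>S. f (g x :: 'm::comm_monoid_add))"
  by (induction S rule: infinite_finite_induct) (auto simp: distributive_def)

lemma asc_chain_mono: "asc_chain K \<Longrightarrow> i \<le> j \<Longrightarrow> mle (K i) (K j)"
  by (induction j) (auto simp: asc_chain_def le_Suc_eq mle_refl intro: mle_trans)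

lemma asc_chain_sum:
  "(\<And>x. x \<in> X \<Longrightarrow> asc_chain (K x)) \<Longrightarrow> asc_chain (\<lambda>n. \<Sum>x\<in>X. (K x n :: 'm::comm_monoid_add))"
  unfolding asc_chain_def by (auto intro: mle_sum_mono)

lemma asc_chain_distributive:
  "distributive f \<Longrightarrow> asc_chain K \<Longrightarrow> asc_chain (\<lambda>n. f (K n :: 'm::comm_monoid_add))"
  unfolding asc_chain_def by (auto intro: distributive_mle_mono)

lemma is_lub_ub: "is_lub S u \<Longrightarrow> s \<in> S \<Longrightarrow> mle s u"
  unfolding is_lub_def by blast

lemma is_lub_least: "is_lub S u \<Longrightarrow> (\<And>s. s \<in> S \<Longrightarrow> mle s v) \<Longrightarrow> mle u v"
  unfolding is_lub_def by blast

lemma is_lub_cong_ub: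
  "(\<And>v. (\<forall>s\<in>S. mle s v) \<longleftrightarrow> (\<forall>t\<in>T. mle t v)) \<Longrightarrow> is_lub S u \<Longrightarrow> is_lub T u"
  unfolding is_lub_def by blast

lemma is_lub_const: "is_lub (range (\<lambda>_::nat. c)) (c::'m::comm_monoid_add)"
  unfolding is_lub_def by (auto simp: mle_refl)

context
  assumes flow_monoid: "flow_monoid TYPE('m::comm_monoid_add)"
begin

lemma mle_antisym: "mle (a::'m) b \<Longrightarrow> mle b a \<Longrightarrow> a = b"
  using flow_monoid unfolding flow_monoid_def by blast

lemma is_lub_unique: "is_lub S (u::'m) \<Longrightarrow> is_lub S v \<Longrightarrow> u = v"
  unfolding is_lub_def by (blast intro: mle_antisym)

lemma lub_eq: "is_lub S (u::'m) \<Longrightarrow> lub S = u"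
  unfolding lub_def using is_lub_unique by blast

lemma is_lub_chain: "asc_chain (K::nat \<Rightarrow> 'm) \<Longrightarrow> is_lub (range K) (lub (range K))"
  using flow_monoid unfolding flow_monoid_def by (metis lub_eq)

lemma is_lub_chain_add_left:
  "asc_chain (K::nat \<Rightarrow> 'm) \<Longrightarrow> is_lub (range (\<lambda>i. n + K i)) (n + lub (range K))"
  using flow_monoid unfolding flow_monoid_def by blast

lemma mcont_lub: "mcont f \<Longrightarrow> asc_chain (K::nat \<Rightarrow> 'm) \<Longrightarrow> f (lub (range K)) = lub (range (\<lambda>i. f (K i)))"
  unfolding mcont_def by (metis lub_eq)

lemma lub_chain_shift: "asc_chain (K::nat \<Rightarrow> 'm) \<Longrightarrow> lub (range (\<lambda>n. K (Suc n))) = lub (range K)"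
  by (rule lub_eq, rule is_lub_cong_ub[OF _ is_lub_chain])
    (auto simp: asc_chain_def, metis mle_trans not0_implies_Suc)

lemma is_lub_chain_add:
  assumes a: "asc_chain (a::nat \<Rightarrow> 'm)" and b: "asc_chain b"
  shows "is_lub (range (\<lambda>n. a n + b n)) (lub (range a) + lub (range b))"
  unfolding is_lub_def
proof (intro conjI allI impI ballI)
  fix s assume "s \<in> range (\<lambda>n. a n + b n)"
  then show "mle s (lub (range a) + lub (range b))"
    using is_lub_ub[OF is_lub_chain[OF a]] is_lub_ub[OF is_lub_chain[OF b]]
    by (auto intro: mle_add_mono)
next
  fix v assume v: "\<forall>s\<in>range (\<lambda>n. a n + b n). mle s v"
  \<comment> \<open>the two chains may be taken at different indices: both sit below their common maximum\<close>
  have "mle (a i + b j) v" for i j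
    using v asc_chain_mono[OF a, of i "max i j"] asc_chain_mono[OF b, of j "max i j"]
    by (auto intro: mle_trans mle_add_mono)
  then have "mle (lub (range b) + a i) v" for i
    by (subst add.commute) (blast intro: is_lub_least[OF is_lub_chain_add_left[OF b]])
  then have "mle (lub (range b) + lub (range a)) v"
    by (blast intro: is_lub_least[OF is_lub_chain_add_left[OF a]])
  then show "mle (lub (range a) + lub (range b)) v"
    by (simp only: add.commute)
qed

lemma lub_chain_sum:
  assumes "finite X" "\<And>x. x \<in> X \<Longrightarrow> asc_chain (K x :: nat \<Rightarrow> 'm)"
  shows "lub (range (\<lambda>n. \<Sum>x\<in>X. K x n)) = (\<Sum>x\<in>X. lub (range (K x)))"
  using assms
proof (induction X rule: finite_induct)
  case empty
  then show ?case using lub_eq[OF is_lub_const] by simp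
next
  case (insert x F)
  then have "asc_chain (\<lambda>n. \<Sum>x\<in>F. K x n)"
    by (intro asc_chain_sum) auto
  with insert show ?case
    using lub_eq[OF is_lub_chain_add[of "K x"]] by simp
qed

lemma msum_eq_lub_chain:
  assumes fin: "\<And>n. finite (A n)" and mono: "\<And>n. A n \<subseteq> A (Suc n)" and exhaust: "(\<Union>n. A n) = S"
  shows "msum (f::_ \<Rightarrow> 'm) S = lub (range (\<lambda>n. sum f (A n)))"
proof -
  have chain: "asc_chain (\<lambda>n. sum f (A n))"
    unfolding asc_chain_def using fin mono by (auto intro: mle_sum_subset)
  have cover: "\<exists>n. F \<subseteq> A n" if "finite F" "F \<subseteq> S" for F
    using that
  proof (induction F rule: finite_induct)
    case (insert x F)
    then obtain n m where "F \<subseteq> A n" "x \<in> A m"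
      using exhaust by auto
    moreover have "A n \<subseteq> A (max n m)" "A m \<subseteq> A (max n m)"
      by (rule lift_Suc_mono_le[of A, OF mono], simp)+
    ultimately show ?case by blast
  qed simp
  have "mle (sum f F) v"
    if "\<forall>n. mle (sum f (A n)) v" "finite F" "F \<subseteq> S" for F v
    using cover[OF that(2,3)] that(1) mle_sum_subset[OF fin] by (blast intro: mle_trans)
  then have "is_lub {sum f F | F. finite F \<and> F \<subseteq> S} (lub (range (\<lambda>n. sum f (A n))))"
    by (intro is_lub_cong_ub[OF _ is_lub_chain[OF chain]]) (use fin exhaust in blast)
  then show ?thesis
    unfolding msum_def by (rule lub_eq)
qed

end

subsection \<open>The flow as limit of Kleene iterates\<close>

fun flow_iterate :: "nat set \<Rightarrow> (nat \<Rightarrow> nat \<Rightarrow> 'm \<Rightarrow> 'm) \<Rightarrow> (nat \<Rightarrow> nat \<Rightarrow> 'm::comm_monoid_add)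
    \<Rightarrow> nat \<Rightarrow> nat \<Rightarrow> 'm" where
  "flow_iterate X E infl 0 x = 0"
| "flow_iterate X E infl (Suc n) x =
     (if x \<in> X then inflow_at X infl x + (\<Sum>y\<in>X. E y x (flow_iterate X E infl n y)) else 0)"

lemma flow_iterate_Suc_mono:
  assumes "\<And>x w. x \<in> X \<Longrightarrow> distributive (E x w)"
  shows "mle (flow_iterate X E infl n x) (flow_iterate X E infl (Suc n) x)"
proof (induction n arbitrary: x)
  case (Suc n)
  then have "mle (\<Sum>y\<in>X. E y x (flow_iterate X E infl n y)) (\<Sum>y\<in>X. E y x (flow_iterate X E infl (Suc n) y))"
    using assms by (blast intro: mle_sum_mono distributive_mle_mono)
  then show ?case
    by (simp add: mle_refl mle_add_mono)
qed (simp add: mle_0)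

lemma asc_chain_flow_iterate:
  "(\<And>x w. x \<in> X \<Longrightarrow> distributive (E x w)) \<Longrightarrow> asc_chain (\<lambda>n. flow_iterate X E infl n x)"
  unfolding asc_chain_def by (blast intro: flow_iterate_Suc_mono)

lemma flow_iterate_le_solution:
  assumes "\<And>x w. x \<in> X \<Longrightarrow> distributive (E x w)" and "is_flow X E infl G" and "x \<in> X"
  shows "mle (flow_iterate X E infl n x) (G x)"
  using assms(3)
proof (induction n arbitrary: x)
  case (Suc n)
  then have "mle (\<Sum>y\<in>X. E y x (flow_iterate X E infl n y)) (\<Sum>y\<in>X. E y x (G y))"
    using assms(1) by (blast intro: mle_sum_mono distributive_mle_mono)
  then show ?case
    using assms(2) Suc.prems unfolding is_flow_def by (simp add: mle_refl mle_add_mono)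
qed (simp add: mle_0)

context
  assumes flow_monoid: "flow_monoid TYPE('m::comm_monoid_add)"
begin

lemma flow_eqI:
  assumes "is_flow X E infl (F::nat \<Rightarrow> 'm)"
    and "\<And>G x. is_flow X E infl G \<Longrightarrow> x \<in> X \<Longrightarrow> mle (F x) (G x)"
    and "\<And>x. x \<notin> X \<Longrightarrow> F x = 0"
  shows "flow X E infl = F"
  unfolding flow_def
proof (rule the_equality)
  fix F' assume F': "is_flow X E infl F' \<and> (\<forall>G. is_flow X E infl G \<longrightarrow> (\<forall>x\<in>X. mle (F' x) (G x)))
    \<and> (\<forall>x. x \<notin> X \<longrightarrow> F' x = 0)"
  show "F' = F"
  proof
    fix x show "F' x = F x"
      using F' assms by (cases "x \<in> X") (auto intro: mle_antisym[OF flow_monoid])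
  qed
qed (use assms in blast)

lemma is_flow_lub_flow_iterate:
  assumes "finite X" and E: "\<And>x w. x \<in> X \<Longrightarrow> mcont (E x w) \<and> distributive (E x w)"
  shows "is_flow X E infl (\<lambda>x. lub (range (\<lambda>n. flow_iterate X E infl n x :: 'm)))"
  unfolding is_flow_def
proof
  fix x assume "x \<in> X"
  let ?F = "\<lambda>y n. flow_iterate X E infl n y"
  have chain: "asc_chain (?F y)" for y
    using E by (blast intro: asc_chain_flow_iterate)
  have edge_chain: "asc_chain (\<lambda>n. E y x (?F y n))" if "y \<in> X" for y
    using E[OF that] chain asc_chain_distributive by blast
  have "lub (range (?F x)) = lub (range (\<lambda>n. ?F x (Suc n)))"
    by (rule lub_chain_shift[OF flow_monoid chain, symmetric])
  also have "\<dots> = inflow_at X infl x + lub (range (\<lambda>n. \<Sum>y\<in>X. E y x (?F y n)))"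
    using \<open>x \<in> X\<close> lub_eq[OF flow_monoid is_lub_chain_add_left[OF flow_monoid asc_chain_sum[OF edge_chain]]]
    by simp
  also have "\<dots> = inflow_at X infl x + (\<Sum>y\<in>X. lub (range (\<lambda>n. E y x (?F y n))))"
    by (simp add: lub_chain_sum[OF flow_monoid \<open>finite X\<close> edge_chain])
  also have "\<dots> = inflow_at X infl x + (\<Sum>y\<in>X. E y x (lub (range (?F y))))"
    using E by (auto intro!: sum.cong simp flip: mcont_lub[OF flow_monoid _ chain])
  finally show "lub (range (?F x)) = inflow_at X infl x + (\<Sum>y\<in>X. E y x (lub (range (?F y))))" .
qed

lemma flow_eq_lub_flow_iterate:
  assumes "finite X" and E: "\<And>x w. x \<in> X \<Longrightarrow> mcont (E x w) \<and> distributive (E x w)"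
  shows "flow X E infl = (\<lambda>x. lub (range (\<lambda>n. flow_iterate X E infl n x :: 'm)))"
proof (rule flow_eqI[OF is_flow_lub_flow_iterate[OF assms]])
  fix G x assume "is_flow X E infl G" "x \<in> X"
  then have "mle (flow_iterate X E infl n x) (G x)" for n
    using E by (blast intro: flow_iterate_le_solution)
  moreover have "asc_chain (\<lambda>n. flow_iterate X E infl n x)"
    using E by (blast intro: asc_chain_flow_iterate)
  ultimately show "mle (lub (range (\<lambda>n. flow_iterate X E infl n x))) (G x)"
    by (blast intro: is_lub_least[OF is_lub_chain[OF flow_monoid]])
next
  fix x assume "x \<notin> X"
  then have "flow_iterate X E infl n x = 0" for n
    by (cases n) simp_all
  then have "(\<lambda>n. flow_iterate X E infl n x) = (\<lambda>_. 0)"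
    by blast
  then show "lub (range (\<lambda>n. flow_iterate X E infl n x)) = 0"
    using lub_eq[OF flow_monoid is_lub_const] by (simp only:)
qed

end

subsection \<open>Iterates as sums over length-bounded paths\<close>

definition paths_upto :: "nat set \<Rightarrow> nat \<Rightarrow> nat \<Rightarrow> nat \<Rightarrow> nat list set" where
  "paths_upto X n x y = {p. p \<noteq> [] \<and> set p \<subseteq> X \<and> hd p = x \<and> last p = y \<and> length p \<le> n}"

lemma finite_paths_upto: "finite X \<Longrightarrow> finite (paths_upto X n x y)"
  unfolding paths_upto_def by (rule finite_subset[OF _ finite_lists_length_le[of X n]]) auto

lemma paths_upto_0 [simp]: "paths_upto X 0 x y = {}"
  unfolding paths_upto_def by auto

lemma paths_upto_Suc_mono: "paths_upto X n x y \<subseteq> paths_upto X (Suc n) x y"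
  unfolding paths_upto_def by auto

lemma UN_paths_upto: "z \<notin> X \<Longrightarrow> (\<Union>n. paths_upto X n x y) = paths (X, E, in0) x y z"
  unfolding paths_def paths_upto_def by auto

lemma paths_upto_Suc:
  assumes "y \<in> X"
  shows "paths_upto X (Suc n) x y =
    (if x = y then {[y]} else {}) \<union> (\<Union>w\<in>X. (\<lambda>p. p @ [y]) ` paths_upto X n x w)"
    (is "_ = ?single \<union> ?ext")
proof (intro equalityI subsetI)
  fix q assume q: "q \<in> paths_upto X (Suc n) x y"
  then have "q \<noteq> []" "last q = y"
    by (simp_all add: paths_upto_def)
  then have "q = butlast q @ [y]"
    using append_butlast_last_id[of q] by simp
  then obtain p where qp: "q = p @ [y]" ..
  show "q \<in> ?single \<union> ?ext"
  proof (cases "p = []")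
    case True
    then show ?thesis using q qp by (simp add: paths_upto_def)
  next
    case False
    then have "p \<in> paths_upto X n x (last p)" "last p \<in> X"
      using q qp by (auto simp: paths_upto_def)
    then show ?thesis using qp by blast
  qed
next
  fix q assume "q \<in> ?single \<union> ?ext"
  then show "q \<in> paths_upto X (Suc n) x y"
    using assms by (auto simp: paths_upto_def split: if_splits)
qed

lemma inner_edges_snoc: "p \<noteq> [] \<Longrightarrow> inner_edges E (p @ [y]) = E (last p) y \<circ> inner_edges E p"
  by (induction p rule: induct_list012) (auto simp: comp_assoc)

lemma sum_paths_upto_Suc:
  fixes E :: "nat \<Rightarrow> nat \<Rightarrow> 'm::comm_monoid_add \<Rightarrow> 'm"
  assumes "finite X" and "y \<in> X"
  shows "(\<Sum>p\<in>paths_upto X (Suc n) x y. inner_edges E p a) =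
    (if x = y then a else 0) + (\<Sum>w\<in>X. \<Sum>p\<in>paths_upto X n x w. E w y (inner_edges E p a))"
proof -
  let ?ext = "\<lambda>w. (\<lambda>p. p @ [y]) ` paths_upto X n x w"
  have finite_ext: "finite (?ext w)" for w
    by (simp add: finite_paths_upto \<open>finite X\<close>)
  have "(\<Sum>p\<in>paths_upto X (Suc n) x y. inner_edges E p a) =
      (\<Sum>p\<in>(if x = y then {[y]} else {}). inner_edges E p a) + (\<Sum>p\<in>(\<Union>w\<in>X. ?ext w). inner_edges E p a)"
    unfolding paths_upto_Suc[OF \<open>y \<in> X\<close>]
    by (rule sum.union_disjoint) (use finite_ext \<open>finite X\<close> in \<open>auto simp: paths_upto_def\<close>)
  also have "(\<Sum>p\<in>(\<Union>w\<in>X. ?ext w). inner_edges E p a) = (\<Sum>w\<in>X. \<Sum>p\<in>?ext w. inner_edges E p a)"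
    by (rule sum.UNION_disjoint) (use finite_ext \<open>finite X\<close> in \<open>auto simp: paths_upto_def\<close>)
  also have "\<dots> = (\<Sum>w\<in>X. \<Sum>p\<in>paths_upto X n x w. E w y (inner_edges E p a))"
  proof (rule sum.cong[OF refl])
    fix w
    have "inj_on (\<lambda>p. p @ [y]) (paths_upto X n x w)"
      by (simp add: inj_on_def)
    then show "(\<Sum>p\<in>?ext w. inner_edges E p a) = (\<Sum>p\<in>paths_upto X n x w. E w y (inner_edges E p a))"
      by (simp add: sum.reindex paths_upto_def inner_edges_snoc)
  qed
  finally show ?thesis
    by simp
qed

lemma flow_iterate_eq_sum_paths_upto:
  assumes "finite X" and dist: "\<And>x w. x \<in> X \<Longrightarrow> distributive (E x w)" and "y \<in> X"
  shows "flow_iterate X E infl n y =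
    (\<Sum>x\<in>X. \<Sum>p\<in>paths_upto X n x y. inner_edges E p (inflow_at X infl x))"
  using \<open>y \<in> X\<close>
proof (induction n arbitrary: y)
  case (Suc n)
  let ?I = "inflow_at X infl"
  have "flow_iterate X E infl (Suc n) y =
      ?I y + (\<Sum>w\<in>X. E w y (\<Sum>x\<in>X. \<Sum>p\<in>paths_upto X n x w. inner_edges E p (?I x)))"
    using Suc by simp
  also have "\<dots> = ?I y + (\<Sum>w\<in>X. \<Sum>x\<in>X. \<Sum>p\<in>paths_upto X n x w. E w y (inner_edges E p (?I x)))"
    using dist by (simp add: distributive_sum)
  also have "\<dots> = ?I y + (\<Sum>x\<in>X. \<Sum>w\<in>X. \<Sum>p\<in>paths_upto X n x w. E w y (inner_edges E p (?I x)))"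
    by (subst sum.swap) (rule refl)
  also have "\<dots> = (\<Sum>x\<in>X. (if x = y then ?I x else 0)) +
      (\<Sum>x\<in>X. \<Sum>w\<in>X. \<Sum>p\<in>paths_upto X n x w. E w y (inner_edges E p (?I x)))"
    using Suc.prems \<open>finite X\<close> by simp
  also have "\<dots> = (\<Sum>x\<in>X. \<Sum>p\<in>paths_upto X (Suc n) x y. inner_edges E p (?I x))"
    by (simp only: sum_paths_upto_Suc[OF \<open>finite X\<close> Suc.prems] sum.distrib)
  finally show ?case .
qed simp

theorem theorem3:
  fixes X :: "nat set" and E :: "nat \<Rightarrow> nat \<Rightarrow> 'm::comm_monoid_add \<Rightarrow> 'm"
    and in0 infl :: "nat \<Rightarrow> nat \<Rightarrow> 'm" and y z :: nat
  assumes "flow_monoid TYPE('m)"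
    and "finite X"
    and "\<forall>x\<in>X. \<forall>w. mcont (E x w) \<and> distributive (E x w)"
    and "y \<in> X" and "z \<notin> X"
  shows "tf (X, E, in0) infl y z =
    (\<Sum>x\<in>X. msum (\<lambda>p. path_fun E p z (inflow_at X infl x)) (paths (X, E, in0) x y z))"
proof -
  have E: "\<And>x w. x \<in> X \<Longrightarrow> mcont (E x w) \<and> distributive (E x w)"
    using assms(3) by blast
  then have dist: "\<And>x w. x \<in> X \<Longrightarrow> distributive (E x w)"
    by blast
  let ?S = "\<lambda>x n. \<Sum>p\<in>paths_upto X n x y. path_fun E p z (inflow_at X infl x)"
  have chain: "asc_chain (?S x)" for x
    unfolding asc_chain_def
    using mle_sum_subset[OF finite_paths_upto[OF assms(2)] paths_upto_Suc_mono] by blast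
  have "tf (X, E, in0) infl y z = E y z (lub (range (\<lambda>n. flow_iterate X E infl n y)))"
    using assms(4,5) by (simp add: tf_def outflow_def flow_eq_lub_flow_iterate[OF assms(1,2) E])
  also have "\<dots> = lub (range (\<lambda>n. E y z (flow_iterate X E infl n y)))"
    by (rule mcont_lub[OF assms(1) _ asc_chain_flow_iterate[OF dist]]) (use E[OF assms(4)] in blast)
  also have "(\<lambda>n. E y z (flow_iterate X E infl n y)) = (\<lambda>n. \<Sum>x\<in>X. ?S x n)"
    using dist[OF assms(4)]
    by (simp add: flow_iterate_eq_sum_paths_upto[OF assms(2) dist assms(4)] distributive_sum
        path_fun_def paths_upto_def)
  also have "lub (range \<dots>) = (\<Sum>x\<in>X. lub (range (?S x)))"
    by (rule lub_chain_sum[OF assms(1,2) chain])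
  also have "\<dots> = (\<Sum>x\<in>X. msum (\<lambda>p. path_fun E p z (inflow_at X infl x)) (paths (X, E, in0) x y z))"
    by (simp add: msum_eq_lub_chain[OF assms(1) finite_paths_upto[OF assms(2)] paths_upto_Suc_mono
          UN_paths_upto[OF assms(5)]])
  finally show ?thesis .
qed

end
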